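(* Assume (STAB). Then for any $\Omega\subseteq\Lambda$ the deformation $y\equiv0$ is a strongly stable equilibrium of $E^\Omega$. Precisely, for all $v\in\mathscr W_0(\Omega)$, $$\langle\delta^2E^\Omega(0)v,v\rangle=\psi''(0)\sum_{b\in\mathcal B^\Omega}Dv_b^2,\qquad\text{and}\qquad \psi''(0)\ge\lambda_d>0.$$
   Context: Lattice $\Lambda:=\tfrac{a_1+a_2}{3}+\{ma_1+na_2:m,n\in\mathbb Z\}$ with $a_1=(1,0)^T$, $a_2=(\tfrac12,\tfrac{\sqrt3}2)^T$; bonds $\mathcal B$ are oriented nearest-neighbour pairs; $\mathcal B^\Omega$ those with both endpoints in $\Omega$. $\mathscr W(\Omega)$: functions $\Omega\to\mathbb R$; $Dy_b:=y(\eta)-y(\xi)$ for $b=(\xi,\eta)$; $\xi_0=(0,\sqrt3/3)^T$; $\mathscr W_0(\Omega)=\{v:v(\xi_0)=0,\ \mathrm{supp}(Dv)\text{ bounded}\}$; $\dot{\mathscr W}^{1,2}(\Omega)=\{v:v(\xi_0)=0,\ Dv\in\ell^2\}$. $\psi\in C^4(\mathbb R)$, $1$-periodic and even; $E^\Omega(y;\tilde y):=\sum_{b\in\mathcal B^\Omega}[\psi(Dy_b)-\psi(D\tilde y_b)]$; $\langle\delta^2E^\Omega(y)v,w\rangle:=\sum_{b\in\mathcal B^\Omega}\psi''(Dy_b)Dv_bDw_b$; $E:=E^\Lambda$. A locally stable equilibrium is $y$ with $E^\Omega(y+u;y)\ge0$ for all $u\in\mathscr W_0(\Omega)$ with $\|Du\|_{\ell^2}\le\epsilon$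 for some $\epsilon>0$; it is strongly stable if additionally $\langle\delta^2E^\Omega(y)v,v\rangle\ge\lambda\|Dv\|_{\ell^2}^2$ for all $v\in\mathscr W_0(\Omega)$, some $\lambda>0$. $\hat y(x):=\frac1{2\pi}\arg(x)$ (branch cut on the positive $x_1$-axis) as a function on $\Lambda$. (STAB): there is $u\in\dot{\mathscr W}^{1,2}(\Lambda)$ with $\hat y+u$ a strongly stable equilibrium of $E$; $\lambda_d$ denotes its strong stability constant $\lambda$. *)

theory Defs
  imports "HOL-Analysis.Analysis"
begin

text \<open>Points of R^2 are represented as complex numbers (x1 + i x2).
  Deformations are functions complex => real; only their values on the
  relevant set matter (plus the normalisation at xi0).\<close>

definition a1 :: complex where "a1 = 1"
definition a2 :: complex where "a2 = Complex (1/2) (sqrt 3 / 2)"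

definition Lat :: "complex set" where
  "Lat = {(a1 + a2) / 3 + of_int m * a1 + of_int n * a2 | m n :: int. True}"

text \<open>Oriented nearest-neighbour bonds with both endpoints in Omega
  (nearest-neighbour distance of the lattice is 1).\<close>
definition bonds :: "complex set \<Rightarrow> (complex \<times> complex) set" where
  "bonds \<Omega> = {(\<xi>, \<eta>). \<xi> \<in> \<Omega> \<and> \<eta> \<in> \<Omega> \<and> \<xi> \<in> Lat \<and> \<eta> \<in> Lat \<and> cmod (\<eta> - \<xi>) = 1}"

definition Dif :: "(complex \<Rightarrow> real) \<Rightarrow> complex \<times> complex \<Rightarrow> real" where
  "Dif y b = y (snd b) - y (fst b)"

definition xi0 :: complex where "xi0 = Complex 0 (sqrt 3 / 3)"

definition W0 :: "complex set \<Rightarrow> (complex \<Rightarrow> real) set" where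
  "W0 \<Omega> = {v. v xi0 = 0 \<and> bounded (fst ` {b \<in> bonds \<Omega>. Dif v b \<noteq> 0})}"

definition W12 :: "complex set \<Rightarrow> (complex \<Rightarrow> real) set" where
  "W12 \<Omega> = {v. v xi0 = 0 \<and> (\<lambda>b. (Dif v b)\<^sup>2) summable_on bonds \<Omega>}"

definition l2sq :: "complex set \<Rightarrow> (complex \<Rightarrow> real) \<Rightarrow> real" where
  "l2sq \<Omega> v = (\<Sum>\<^sub>\<infinity>b\<in>bonds \<Omega>. (Dif v b)\<^sup>2)"

definition C4 :: "(real \<Rightarrow> real) \<Rightarrow> bool" where
  "C4 f \<longleftrightarrow> (\<forall>k<4. \<forall>x. ((deriv ^^ k) f) differentiable (at x))
            \<and> continuous_on UNIV ((deriv ^^ 4) f)"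

definition psi2 :: "(real \<Rightarrow> real) \<Rightarrow> real \<Rightarrow> real" where
  "psi2 \<psi> = deriv (deriv \<psi>)"

definition Ediff :: "(real \<Rightarrow> real) \<Rightarrow> complex set \<Rightarrow> (complex \<Rightarrow> real) \<Rightarrow> (complex \<Rightarrow> real) \<Rightarrow> real" where
  "Ediff \<psi> \<Omega> y y' = (\<Sum>\<^sub>\<infinity>b\<in>bonds \<Omega>. \<psi> (Dif y b) - \<psi> (Dif y' b))"

definition hess :: "(real \<Rightarrow> real) \<Rightarrow> complex set \<Rightarrow> (complex \<Rightarrow> real) \<Rightarrow> (complex \<Rightarrow> real) \<Rightarrow> (complex \<Rightarrow> real) \<Rightarrow> real" where
  "hess \<psi> \<Omega> y v w = (\<Sum>\<^sub>\<infinity>b\<in>bonds \<Omega>. psi2 \<psi> (Dif y b) * Dif v b * Dif w b)"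

definition locally_stable :: "(real \<Rightarrow> real) \<Rightarrow> complex set \<Rightarrow> (complex \<Rightarrow> real) \<Rightarrow> bool" where
  "locally_stable \<psi> \<Omega> y \<longleftrightarrow>
     (\<exists>\<epsilon>>0. \<forall>u\<in>W0 \<Omega>. sqrt (l2sq \<Omega> u) \<le> \<epsilon> \<longrightarrow> Ediff \<psi> \<Omega> (\<lambda>x. y x + u x) y \<ge> 0)"

definition strongly_stable_with :: "(real \<Rightarrow> real) \<Rightarrow> complex set \<Rightarrow> (complex \<Rightarrow> real) \<Rightarrow> real \<Rightarrow> bool" where
  "strongly_stable_with \<psi> \<Omega> y lam \<longleftrightarrow> locally_stable \<psi> \<Omega> y \<and> lam > 0 \<and>
     (\<forall>v\<in>W0 \<Omega>. hess \<psi> \<Omega> y v v \<ge> lam * l2sq \<Omega> v)"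

definition strongly_stable :: "(real \<Rightarrow> real) \<Rightarrow> complex set \<Rightarrow> (complex \<Rightarrow> real) \<Rightarrow> bool" where
  "strongly_stable \<psi> \<Omega> y \<longleftrightarrow> (\<exists>lam. strongly_stable_with \<psi> \<Omega> y lam)"

text \<open>arg with branch cut on the positive x1-axis, values in [0, 2 pi).\<close>
definition yhat :: "complex \<Rightarrow> real" where
  "yhat x = (if Arg x \<ge> 0 then Arg x else Arg x + 2 * pi) / (2 * pi)"

end

theory Submission
  imports Defs "HOL-Library.Periodic_Fun"
begin

text \<open>Far from the dislocation core, yhat changes by almost an integer across every
  bond and, since Du is square summable, u changes by almost nothing. Testing the strong
  stability of yhat + u with the indicator of a single far-away site, the periodicity of
  psi'' turns the Hessian into a sum of values of psi'' close to psi''(0) over the bonds at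
  that site, which forces psi''(0) \<ge> lambda_d > 0. The Hessian at y = 0 is psi''(0) times
  the squared l2 norm, and since psi is even with psi''(0) > 0, zero is a local minimum of psi,
  which yields local stability of y = 0 on every Omega.\<close>

lemma deriv_periodic:
  fixes f :: "real \<Rightarrow> real"
  assumes "\<And>x. f (x + 1) = f x"
  shows "deriv f (x + 1) = deriv f x"
proof -
  have "(\<lambda>t. f (t + 1)) = f" using assms by auto
  then have "DERIV f (x + 1) :> D \<longleftrightarrow> DERIV f x :> D" for D
    using DERIV_shift[of f D x 1] by simp
  then show ?thesis unfolding deriv_def by simp
qed

lemma psi2_plus_of_int:
  assumes "\<And>x. f (x + 1) = f x"
  shows "psi2 f (x + of_int k) = psi2 f x"
proof -
  interpret periodic_fun_simple' "psi2 f"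
    unfolding psi2_def by standard (intro deriv_periodic assms)
  show ?thesis by (rule plus_of_int)
qed

lemma isCont_psi2:
  assumes "C4 f"
  shows "isCont (psi2 f) x"
proof -
  have "((deriv ^^ 2) f) differentiable (at x)" using assms unfolding C4_def by auto
  then show ?thesis
    by (simp add: psi2_def numeral_2_eq_2 differentiable_imp_continuous_within)
qed

lemma deriv_zero_if_even:
  fixes f :: "real \<Rightarrow> real"
  assumes "f differentiable (at 0)" "\<And>x. f (- x) = f x"
  shows "deriv f 0 = 0"
proof -
  have D: "DERIV f 0 :> deriv f 0"
    using assms(1) DERIV_deriv_iff_real_differentiable by blast
  have "(\<lambda>x. f (- x)) = f" using assms(2) by auto
  then have "DERIV f 0 :> - deriv f 0"
    using DERIV_mirror[of f "deriv f 0" 0] D by simp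
  from DERIV_unique[OF D this] show ?thesis by simp
qed

lemma even_local_min_if_psi2_pos:
  fixes f :: "real \<Rightarrow> real"
  assumes diff: "\<And>x. f differentiable (at x)" "\<And>x. deriv f differentiable (at x)"
    and cont: "isCont (psi2 f) 0" and even: "\<And>x. f (- x) = f x" and pos: "psi2 f 0 > 0"
  shows "\<exists>\<epsilon>>0. \<forall>t. \<bar>t\<bar> \<le> \<epsilon> \<longrightarrow> f 0 \<le> f t"
proof -
  have D0: "DERIV f x :> deriv f x" for x
    using diff(1) DERIV_deriv_iff_real_differentiable by blast
  have D1: "DERIV (deriv f) x :> psi2 f x" for x
    unfolding psi2_def using diff(2) DERIV_deriv_iff_real_differentiable by blast
  obtain r where r: "r > 0" "\<And>t. \<bar>t\<bar> < r \<Longrightarrow> \<bar>psi2 f t - psi2 f 0\<bar> < psi2 f 0"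
    using cont pos unfolding continuous_at_eps_delta dist_real_def by force
  have deriv_nonneg: "0 \<le> deriv f t" if "0 \<le> t" "t < r" for t
  proof -
    have "deriv f 0 \<le> deriv f t"
    proof (rule DERIV_nonneg_imp_nondecreasing[OF \<open>0 \<le> t\<close>])
      fix x assume "0 \<le> x" "x \<le> t"
      then have "\<bar>x\<bar> < r" using that by simp
      then show "\<exists>y. DERIV (deriv f) x :> y \<and> 0 \<le> y" using D1 r(2)[of x] by force
    qed
    then show ?thesis using deriv_zero_if_even[OF diff(1) even] by simp
  qed
  have right: "f 0 \<le> f t" if "0 \<le> t" "t < r" for t
  proof (rule DERIV_nonneg_imp_nondecreasing[OF \<open>0 \<le> t\<close>])
    fix x assume "0 \<le> x" "x \<le> t"
    then show "\<exists>y. DERIV f x :> y \<and> 0 \<le> y" using that D0 deriv_nonneg[of x] by force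
  qed
  show ?thesis
  proof (intro exI[of _ "r/2"] conjI allI impI)
    fix t :: real assume "\<bar>t\<bar> \<le> r/2"
    then show "f 0 \<le> f t"
      using right[of t] right[of "- t"] even[of t] r(1) by (cases "t \<ge> 0") auto
  qed (use r in simp)
qed

lemma finite_ge_if_summable_on:
  fixes f :: "'a \<Rightarrow> real"
  assumes "f summable_on A" "\<And>x. x \<in> A \<Longrightarrow> 0 \<le> f x" "\<epsilon> > 0"
  shows "finite {x\<in>A. \<epsilon> \<le> f x}"
proof (rule ccontr)
  define N where "N = nat \<lceil>infsum f A / \<epsilon>\<rceil> + 1"
  assume "infinite {x\<in>A. \<epsilon> \<le> f x}"
  then obtain C where C: "finite C" "card C = N" "C \<subseteq> {x\<in>A. \<epsilon> \<le> f x}"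
    using infinite_arbitrarily_large by blast
  have "N * \<epsilon> = sum (\<lambda>_. \<epsilon>) C" using C by simp
  also have "\<dots> \<le> sum f C" by (rule sum_mono) (use C in auto)
  also have "\<dots> \<le> infsum f A" by (rule finite_sum_le_infsum) (use assms C in auto)
  finally have "real N \<le> infsum f A / \<epsilon>" using assms(3) by (simp add: field_simps)
  then show False unfolding N_def by linarith
qed

lemma
  fixes f :: "'a \<Rightarrow> real"
  assumes "finite S" "S \<subseteq> A" "\<And>x. x \<in> A - S \<Longrightarrow> f x = 0"
  shows infsum_finite_support: "infsum f A = sum f S"
    and summable_on_finite_support: "f summable_on A"
proof -
  have "infsum f A = infsum f S" by (rule infsum_cong_neutral) (use assms in auto)
  then show "infsum f A = sum f S" using assms by simp
  have "f summable_on A \<longleftrightarrow> f summable_on S" by (rule summable_on_cong_neutral) (use assms in auto)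
  then show "f summable_on A" using assms by simp
qed

lemma Lat_iff: "p \<in> Lat \<longleftrightarrow> (\<exists>m n :: int. p = (a1 + a2) / 3 + of_int m * a1 + of_int n * a2)"
  unfolding Lat_def by blast

lemma finite_Lat_Int_cball: "finite (Lat \<inter> cball 0 R)"
proof -
  define K where "K = \<lceil>4 * R + 4\<rceil>"
  define P where "P = (\<lambda>(m::int, n::int). (a1 + a2) / 3 + of_int m * a1 + of_int n * a2)"
  have "Lat \<inter> cball 0 R \<subseteq> P ` ({-K..K} \<times> {-K..K})"
  proof
    fix p assume p: "p \<in> Lat \<inter> cball 0 R"
    then obtain m n :: int where pe: "p = (a1 + a2) / 3 + of_int m * a1 + of_int n * a2"
      by (auto simp: Lat_iff)
    have re: "Re p = 1/2 + m + n/2" and im: "Im p = sqrt 3 / 6 + n * sqrt 3 / 2"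
      using pe by (simp_all add: a1_def a2_def)
    have "\<bar>Re p\<bar> \<le> R" "\<bar>Im p\<bar> \<le> R"
      using p abs_Re_le_cmod abs_Im_le_cmod by (fastforce intro: order.trans)+
    have s3: "1 \<le> sqrt 3" "sqrt 3 \<le> 2"
      using real_sqrt_le_mono[of 3 4] by simp_all
    have "\<bar>real_of_int n * sqrt 3 / 2\<bar> \<le> R + 1"
      using im \<open>\<bar>Im p\<bar> \<le> R\<close> s3 by linarith
    then have "\<bar>real_of_int n\<bar> * sqrt 3 \<le> 2 * R + 2" by (simp add: abs_mult)
    moreover have "\<bar>real_of_int n\<bar> \<le> \<bar>real_of_int n\<bar> * sqrt 3"
      using s3 mult_left_mono[of 1 "sqrt 3" "\<bar>real_of_int n\<bar>"] by simp
    ultimately have "\<bar>real_of_int n\<bar> \<le> 2 * R + 2" by linarith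
    then have "\<bar>n\<bar> \<le> K" "\<bar>m\<bar> \<le> K" using re \<open>\<bar>Re p\<bar> \<le> R\<close> unfolding K_def by linarith+
    then show "p \<in> P ` ({-K..K} \<times> {-K..K})"
      unfolding P_def using pe by (auto intro!: image_eqI[where x="(m,n)"])
  qed
  then show ?thesis by (rule finite_subset) auto
qed

lemma bondsD:
  assumes "b \<in> bonds \<Omega>"
  shows "fst b \<in> \<Omega>" "snd b \<in> \<Omega>" "fst b \<in> Lat" "snd b \<in> Lat" "cmod (snd b - fst b) = 1"
  using assms unfolding bonds_def by auto

lemma norm_snd_le_if_bond: "b \<in> bonds \<Omega> \<Longrightarrow> norm (snd b) \<le> norm (fst b) + 1"
  using norm_triangle_sub[of "snd b" "fst b"] bondsD(5)[of b \<Omega>] by (simp add: add.commute)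

lemma norm_fst_le_if_bond: "b \<in> bonds \<Omega> \<Longrightarrow> norm (fst b) \<le> norm (snd b) + 1"
  using norm_triangle_sub[of "fst b" "snd b"] bondsD(5)[of b \<Omega>] by (simp add: norm_minus_commute)

lemma finite_bonds_if_bounded_fst:
  assumes "S \<subseteq> bonds \<Omega>" "\<And>b. b \<in> S \<Longrightarrow> norm (fst b) \<le> R"
  shows "finite S"
proof -
  have "S \<subseteq> (Lat \<inter> cball 0 R) \<times> (Lat \<inter> cball 0 (R + 1))"
  proof
    fix b assume "b \<in> S"
    then show "b \<in> (Lat \<inter> cball 0 R) \<times> (Lat \<inter> cball 0 (R + 1))"
      using assms bondsD[of b \<Omega>] norm_snd_le_if_bond[of b \<Omega>] by (cases b) fastforce
  qed
  then show ?thesis by (rule finite_subset) (intro finite_cartesian_product finite_Lat_Int_cball)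
qed

lemma finite_W0_support:
  assumes "v \<in> W0 \<Omega>"
  shows "finite {b\<in>bonds \<Omega>. Dif v b \<noteq> 0}"
proof -
  obtain R where "\<And>z. z \<in> fst ` {b\<in>bonds \<Omega>. Dif v b \<noteq> 0} \<Longrightarrow> norm z \<le> R"
    using assms unfolding W0_def bounded_iff by blast
  then show ?thesis by (intro finite_bonds_if_bounded_fst[of _ \<Omega> R]) auto
qed

lemma yhat_eq_Arg_plus_int: "\<exists>j::int. yhat z = Arg z / (2*pi) + j"
proof (cases "Arg z \<ge> 0")
  case True then show ?thesis by (intro exI[of _ 0]) (simp add: yhat_def)
next
  case False then show ?thesis by (intro exI[of _ 1]) (simp add: yhat_def field_simps)
qed

lemma yhat_diff_eq_Arg_divide_plus_int:
  assumes "\<xi> \<noteq> 0" "\<eta> \<noteq> 0"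
  shows "\<exists>k::int. yhat \<eta> - yhat \<xi> = Arg (\<eta> / \<xi>) / (2*pi) + k"
proof -
  define s where "s = Arg \<xi> + Arg (\<eta> / \<xi>)"
  have "Arg \<eta> = Arg (\<xi> * (\<eta> / \<xi>))" using assms by simp
  also have "\<dots> = s + (if s \<in> {-pi<..pi} then 0 else if s > pi then -2*pi else 2*pi)"
    using Arg_times'[of \<xi> "\<eta> / \<xi>"] assms unfolding s_def by simp
  finally obtain c :: int where c: "Arg \<eta> = s + 2*pi*c"
    by (cases "s \<in> {-pi<..pi}"; cases "s > pi") (auto intro: that[of 0] that[of 1] that[of "-1"])
  obtain j1 j2 :: int where "yhat \<eta> = Arg \<eta> / (2*pi) + j1" "yhat \<xi> = Arg \<xi> / (2*pi) + j2"
    using yhat_eq_Arg_plus_int by metis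
  then have "yhat \<eta> - yhat \<xi> = Arg (\<eta> / \<xi>) / (2*pi) + (c + j1 - j2)"
    using c unfolding s_def by (simp add: field_simps)
  then show ?thesis by blast
qed

lemma yhat_increment_near_int:
  assumes "\<delta> > 0"
  shows "\<exists>R. \<forall>\<xi> \<eta>. R \<le> norm \<xi> \<longrightarrow> norm (\<eta> - \<xi>) = 1 \<longrightarrow> (\<exists>k::int. \<bar>yhat \<eta> - yhat \<xi> - k\<bar> < \<delta>)"
proof -
  have "continuous (at 1) Arg" by (rule continuous_at_Arg) (simp add: nonpos_Reals_def)
  moreover have "Arg 1 = 0" using Arg_of_real[of 1] by simp
  moreover have "2*pi*\<delta> > 0" using assms by simp
  ultimately obtain \<rho> where \<rho>: "\<rho> > 0" "\<And>z. dist z 1 < \<rho> \<Longrightarrow> \<bar>Arg z\<bar> < 2*pi*\<delta>"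
    unfolding continuous_at_eps_delta dist_real_def by (metis diff_zero)
  show ?thesis
  proof (intro exI[of _ "2/\<rho> + 2"] allI impI)
    fix \<xi> \<eta> :: complex
    assume \<xi>: "2/\<rho> + 2 \<le> norm \<xi>" and bond: "norm (\<eta> - \<xi>) = 1"
    have "norm \<xi> \<le> norm \<eta> + 1" using norm_triangle_sub[of \<xi> \<eta>] bond by (simp add: norm_minus_commute)
    moreover have "1 < norm \<xi>" using \<xi> \<rho>(1) by (smt (verit) divide_pos_pos)
    ultimately have nz: "\<xi> \<noteq> 0" "\<eta> \<noteq> 0" by auto
    have "1/\<rho> < norm \<xi>" using \<xi> \<rho>(1) by (smt (verit) divide_strict_right_mono)
    then have "1 / norm \<xi> < \<rho>" using \<rho>(1) nz by (simp add: field_simps)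
    moreover have "\<eta> / \<xi> - 1 = (\<eta> - \<xi>) / \<xi>" using nz by (simp add: field_simps)
    then have "dist (\<eta> / \<xi>) 1 = 1 / norm \<xi>" using bond by (simp add: dist_norm norm_divide)
    ultimately have "\<bar>Arg (\<eta> / \<xi>) / (2*pi)\<bar> < \<delta>"
      using \<rho>(2) by (simp add: field_simps)
    moreover obtain k :: int where "yhat \<eta> - yhat \<xi> = Arg (\<eta> / \<xi>) / (2*pi) + k"
      using yhat_diff_eq_Arg_divide_plus_int nz by blast
    ultimately show "\<exists>k::int. \<bar>yhat \<eta> - yhat \<xi> - k\<bar> < \<delta>" by (intro exI[of _ k]) simp
  qed
qed

lemma W12_increment_small_far:
  assumes "u \<in> W12 Lat" "\<delta> > 0"
  shows "\<exists>R. \<forall>b\<in>bonds Lat. R \<le> norm (fst b) \<longrightarrow> \<bar>Dif u b\<bar> < \<delta>"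
proof -
  define F where "F = {b\<in>bonds Lat. \<delta>\<^sup>2 \<le> (Dif u b)\<^sup>2}"
  have "finite F" unfolding F_def
    by (rule finite_ge_if_summable_on) (use assms in \<open>auto simp: W12_def\<close>)
  then obtain B where B: "\<And>b. b \<in> F \<Longrightarrow> norm (fst b) \<le> B"
    using finite_imp_bounded[of "fst ` F"] unfolding bounded_iff by auto
  show ?thesis
  proof (intro exI[of _ "B + 1"] ballI impI)
    fix b assume "b \<in> bonds Lat" "B + 1 \<le> norm (fst b)"
    then have "\<bar>Dif u b\<bar>\<^sup>2 < \<delta>\<^sup>2" using B[of b] unfolding F_def by force
    then show "\<bar>Dif u b\<bar> < \<delta>" using assms(2) by (simp add: power2_less_imp_less)
  qed
qed

lemma yhat_plus_W12_increment_near_int: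
  assumes "u \<in> W12 Lat" "\<delta> > 0"
  shows "\<exists>R. \<forall>b\<in>bonds Lat. R \<le> norm (fst b) \<longrightarrow> (\<exists>k::int. \<bar>Dif (\<lambda>x. yhat x + u x) b - k\<bar> < \<delta>)"
proof -
  obtain R1 where R1: "\<And>\<xi> \<eta>. R1 \<le> norm \<xi> \<Longrightarrow> norm (\<eta> - \<xi>) = 1 \<Longrightarrow> \<exists>k::int. \<bar>yhat \<eta> - yhat \<xi> - k\<bar> < \<delta>/2"
    using yhat_increment_near_int[of "\<delta>/2"] assms(2) by auto
  obtain R2 where R2: "\<And>b. b \<in> bonds Lat \<Longrightarrow> R2 \<le> norm (fst b) \<Longrightarrow> \<bar>Dif u b\<bar> < \<delta>/2"
    using W12_increment_small_far[of u "\<delta>/2"] assms by auto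
  show ?thesis
  proof (intro exI[of _ "max R1 R2"] ballI impI)
    fix b assume b: "b \<in> bonds Lat" "max R1 R2 \<le> norm (fst b)"
    then obtain k :: int where "\<bar>yhat (snd b) - yhat (fst b) - k\<bar> < \<delta>/2"
      using R1 bondsD(5)[of b] by force
    moreover have "\<bar>Dif u b\<bar> < \<delta>/2" using R2 b by simp
    ultimately show "\<exists>k::int. \<bar>Dif (\<lambda>x. yhat x + u x) b - k\<bar> < \<delta>"
      unfolding Dif_def by (intro exI[of _ k]) linarith
  qed
qed

lemma Lat_far_point: "\<exists>\<xi>\<in>Lat. r \<le> Re \<xi>"
proof
  let ?\<xi> = "(a1 + a2) / 3 + of_int \<lceil>r\<rceil> * a1 + of_int 0 * a2"
  show "?\<xi> \<in> Lat" unfolding Lat_iff by blast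
  show "r \<le> Re ?\<xi>" by (simp add: a1_def a2_def) linarith
qed

definition bonds_at :: "complex \<Rightarrow> (complex \<times> complex) set" where
  "bonds_at \<xi> = {b \<in> bonds Lat. fst b = \<xi> \<or> snd b = \<xi>}"

lemma finite_bonds_at: "finite (bonds_at \<xi>)"
  by (rule finite_bonds_if_bounded_fst[of _ Lat "norm \<xi> + 1"])
    (auto simp: bonds_at_def dest: norm_fst_le_if_bond)

lemma bond_a1_in_bonds_at: "\<xi> \<in> Lat \<Longrightarrow> (\<xi>, \<xi> + a1) \<in> bonds_at \<xi>"
proof -
  assume "\<xi> \<in> Lat"
  moreover from this obtain m n :: int where "\<xi> = (a1 + a2) / 3 + of_int m * a1 + of_int n * a2"
    unfolding Lat_iff by blast
  then have "\<xi> + a1 = (a1 + a2) / 3 + of_int (m + 1) * a1 + of_int n * a2"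
    by (simp add: algebra_simps)
  then have "\<xi> + a1 \<in> Lat" unfolding Lat_iff by blast
  ultimately show ?thesis by (simp add: bonds_at_def bonds_def a1_def)
qed

lemma Dif_indicator_sq:
  assumes "b \<in> bonds Lat"
  shows "(Dif (indicator {\<xi>}) b)\<^sup>2 = (if b \<in> bonds_at \<xi> then 1 else 0 :: real)"
proof -
  have "fst b \<noteq> snd b" using bondsD(5)[OF assms] by auto
  then show ?thesis using assms by (auto simp: Dif_def bonds_at_def indicator_def)
qed

lemma Dif_indicator_eq_0_iff:
  assumes "b \<in> bonds Lat"
  shows "Dif (indicator {\<xi>} :: complex \<Rightarrow> real) b = 0 \<longleftrightarrow> b \<notin> bonds_at \<xi>"
  using Dif_indicator_sq[OF assms, of \<xi>] by (auto split: if_splits)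

lemma indicator_in_W0:
  assumes "\<xi> \<noteq> xi0"
  shows "(indicator {\<xi>} :: complex \<Rightarrow> real) \<in> W0 Lat"
proof -
  have "{b\<in>bonds Lat. Dif (indicator {\<xi>} :: complex \<Rightarrow> real) b \<noteq> 0} = bonds_at \<xi>"
    using Dif_indicator_eq_0_iff by (auto simp: bonds_at_def)
  then show ?thesis
    using assms finite_bonds_at[of \<xi>] by (simp add: W0_def finite_imp_bounded)
qed

lemma l2sq_indicator: "l2sq Lat (indicator {\<xi>}) = real (card (bonds_at \<xi>))"
proof -
  have "l2sq Lat (indicator {\<xi>}) = (\<Sum>b\<in>bonds_at \<xi>. (Dif (indicator {\<xi>}) b)\<^sup>2)"
    unfolding l2sq_def
    by (rule infsum_finite_support[OF finite_bonds_at]) (auto simp: bonds_at_def Dif_indicator_sq)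
  also have "\<dots> = (\<Sum>b\<in>bonds_at \<xi>. 1)"
    by (rule sum.cong) (auto simp: bonds_at_def Dif_indicator_sq)
  finally show ?thesis by simp
qed

lemma hess_indicator:
  "hess \<psi> Lat y (indicator {\<xi>}) (indicator {\<xi>}) = (\<Sum>b\<in>bonds_at \<xi>. psi2 \<psi> (Dif y b))"
proof -
  have sq: "psi2 \<psi> (Dif y b) * Dif (indicator {\<xi>}) b * Dif (indicator {\<xi>}) b
      = psi2 \<psi> (Dif y b) * (if b \<in> bonds_at \<xi> then 1 else 0)" if "b \<in> bonds Lat" for b
    using Dif_indicator_sq[OF that, of \<xi>] by (simp add: power2_eq_square mult.assoc)
  have "hess \<psi> Lat y (indicator {\<xi>}) (indicator {\<xi>})
      = (\<Sum>b\<in>bonds_at \<xi>. psi2 \<psi> (Dif y b) * Dif (indicator {\<xi>}) b * Dif (indicator {\<xi>}) b)"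
    unfolding hess_def
    by (rule infsum_finite_support[OF finite_bonds_at]) (auto simp: bonds_at_def sq)
  also have "\<dots> = (\<Sum>b\<in>bonds_at \<xi>. psi2 \<psi> (Dif y b))"
    by (rule sum.cong) (auto simp: bonds_at_def sq)
  finally show ?thesis .
qed

lemma psi2_zero_ge_if_stable:
  fixes \<psi> :: "real \<Rightarrow> real"
  assumes C4: "C4 \<psi>" and periodic: "\<And>x. \<psi> (x + 1) = \<psi> x" and u: "u \<in> W12 Lat"
    and stable: "\<forall>v\<in>W0 Lat. lam * l2sq Lat v \<le> hess \<psi> Lat (\<lambda>x. yhat x + u x) v v"
  shows "lam \<le> psi2 \<psi> 0"
proof (rule field_le_epsilon)
  fix e :: real assume "e > 0"
  then obtain \<rho> where \<rho>: "\<rho> > 0" "\<And>t. \<bar>t\<bar> < \<rho> \<Longrightarrow> \<bar>psi2 \<psi> t - psi2 \<psi> 0\<bar> < e"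
    using isCont_psi2[OF C4, of 0] unfolding continuous_at_eps_delta dist_real_def by force
  obtain R where R: "\<And>b. b \<in> bonds Lat \<Longrightarrow> R \<le> norm (fst b) \<Longrightarrow> \<exists>k::int. \<bar>Dif (\<lambda>x. yhat x + u x) b - k\<bar> < \<rho>"
    using yhat_plus_W12_increment_near_int[OF u \<rho>(1)] by blast
  obtain \<xi> where \<xi>: "\<xi> \<in> Lat" "max R 0 + 1 \<le> Re \<xi>"
    using Lat_far_point by blast
  have far: "R + 1 \<le> norm \<xi>" using \<xi>(2) complex_Re_le_cmod[of \<xi>] by linarith
  have "\<xi> \<noteq> xi0" using \<xi>(2) by (auto simp: xi0_def)
  have near: "psi2 \<psi> (Dif (\<lambda>x. yhat x + u x) b) \<le> psi2 \<psi> 0 + e" if b: "b \<in> bonds_at \<xi>" for b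
  proof -
    have "b \<in> bonds Lat" "R \<le> norm (fst b)"
      using b far norm_snd_le_if_bond[of b Lat] by (auto simp: bonds_at_def)
    then obtain k :: int where "\<bar>Dif (\<lambda>x. yhat x + u x) b - k\<bar> < \<rho>" using R by blast
    moreover have "psi2 \<psi> (Dif (\<lambda>x. yhat x + u x) b) = psi2 \<psi> (Dif (\<lambda>x. yhat x + u x) b - k)"
      using psi2_plus_of_int[of \<psi>, OF periodic, of "Dif (\<lambda>x. yhat x + u x) b - k" k] by simp
    ultimately show ?thesis using \<rho>(2) by fastforce
  qed
  have "0 < card (bonds_at \<xi>)"
    using bond_a1_in_bonds_at[OF \<xi>(1)] finite_bonds_at card_gt_0_iff by blast
  have "card (bonds_at \<xi>) * lam = lam * l2sq Lat (indicator {\<xi>})"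
    by (simp add: l2sq_indicator)
  also have "\<dots> \<le> hess \<psi> Lat (\<lambda>x. yhat x + u x) (indicator {\<xi>}) (indicator {\<xi>})"
    using stable indicator_in_W0[OF \<open>\<xi> \<noteq> xi0\<close>] by blast
  also have "\<dots> \<le> card (bonds_at \<xi>) * (psi2 \<psi> 0 + e)"
    unfolding hess_indicator by (rule sum_bounded_above) (rule near)
  finally show "lam \<le> psi2 \<psi> 0 + e"
    using \<open>0 < card (bonds_at \<xi>)\<close> by (simp add: mult_le_cancel_left_pos)
qed

lemma abs_Dif_le_sqrt_l2sq:
  assumes "w \<in> W0 \<Omega>" "b \<in> bonds \<Omega>"
  shows "\<bar>Dif w b\<bar> \<le> sqrt (l2sq \<Omega> w)"
proof -
  have "(\<lambda>b. (Dif w b)\<^sup>2) summable_on bonds \<Omega>"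
    by (rule summable_on_finite_support[OF finite_W0_support[OF assms(1)]]) auto
  then have "(\<Sum>b\<in>{b}. (Dif w b)\<^sup>2) \<le> l2sq \<Omega> w"
    unfolding l2sq_def by (rule finite_sum_le_infsum) (use assms(2) in auto)
  then show ?thesis using real_sqrt_le_mono by fastforce
qed

lemma locally_stable_zero_if_local_min:
  assumes "\<epsilon> > 0" "\<And>t. \<bar>t\<bar> \<le> \<epsilon> \<Longrightarrow> \<psi> 0 \<le> \<psi> t"
  shows "locally_stable \<psi> \<Omega> (\<lambda>_. 0)"
  unfolding locally_stable_def
proof (intro exI[of _ \<epsilon>] conjI ballI impI)
  fix w assume "w \<in> W0 \<Omega>" "sqrt (l2sq \<Omega> w) \<le> \<epsilon>"
  then have "\<psi> 0 \<le> \<psi> (Dif w b)" if "b \<in> bonds \<Omega>" for b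
    using assms(2) abs_Dif_le_sqrt_l2sq[OF _ that] by fastforce
  then show "0 \<le> Ediff \<psi> \<Omega> (\<lambda>x. 0 + w x) (\<lambda>_. 0)"
    unfolding Ediff_def by (intro infsum_nonneg) (simp add: Dif_def)
qed (rule assms(1))

lemma hess_zero:
  "hess \<psi> \<Omega> (\<lambda>_. 0) v v = psi2 \<psi> 0 * (\<Sum>\<^sub>\<infinity>b\<in>bonds \<Omega>. (Dif v b)\<^sup>2)"
  unfolding hess_def by (simp add: Dif_def power2_eq_square mult.assoc infsum_cmult_right')

theorem mainTheorem3:
  fixes \<psi> :: "real \<Rightarrow> real" and u :: "complex \<Rightarrow> real" and lamd :: real
  assumes "C4 \<psi>" and "\<And>x. \<psi> (x + 1) = \<psi> x" and "\<And>x. \<psi> (- x) = \<psi> x"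
    and "u \<in> W12 Lat"
    and "strongly_stable_with \<psi> Lat (\<lambda>x. yhat x + u x) lamd"
  shows "\<forall>\<Omega>. \<Omega> \<subseteq> Lat \<longrightarrow>
           strongly_stable \<psi> \<Omega> (\<lambda>_. 0)
         \<and> (\<forall>v\<in>W0 \<Omega>. hess \<psi> \<Omega> (\<lambda>_. 0) v v = psi2 \<psi> 0 * (\<Sum>\<^sub>\<infinity>b\<in>bonds \<Omega>. (Dif v b)\<^sup>2))
         \<and> psi2 \<psi> 0 \<ge> lamd \<and> lamd > 0"
proof -
  have lamd: "lamd > 0" "\<forall>v\<in>W0 Lat. lamd * l2sq Lat v \<le> hess \<psi> Lat (\<lambda>x. yhat x + u x) v v"
    using assms(5) unfolding strongly_stable_with_def by auto
  have ge: "lamd \<le> psi2 \<psi> 0" by (rule psi2_zero_ge_if_stable[OF assms(1,2,4) lamd(2)])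
  have "\<And>k x. k < 4 \<Longrightarrow> ((deriv ^^ k) \<psi>) differentiable (at x)"
    using assms(1) unfolding C4_def by blast
  from this[of 0] this[of 1] obtain \<epsilon> where "\<epsilon> > 0" "\<And>t. \<bar>t\<bar> \<le> \<epsilon> \<Longrightarrow> \<psi> 0 \<le> \<psi> t"
    using even_local_min_if_psi2_pos[OF _ _ isCont_psi2[OF assms(1)] assms(3)] ge lamd(1) by force
  then have "strongly_stable \<psi> \<Omega> (\<lambda>_. 0)" for \<Omega>
    unfolding strongly_stable_def strongly_stable_with_def
    using locally_stable_zero_if_local_min ge lamd(1)
    by (auto simp: hess_zero l2sq_def intro!: exI[of _ "psi2 \<psi> 0"])
  then show ?thesis using hess_zero ge lamd(1) by blast
qed

end
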